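(* Let $2\le y\le x$ and let $k\ge0$ be an integer. For $i\ge0$ define $$S_i(x,y)=\{n\le x:\ \text{there is a prime } p>y \text{ with } p^2\mid\phi_i(n)\}.$$ Then $$\left|\Psi(x,P_k)-\Phi_k(x,y)\right|\le\sum_{i=0}^{k-1}|S_i(x,y)|.$$
   Context: $\phi$ is Euler's function, $\phi_0(n)=n$, $\phi_{i+1}(n)=\phi(\phi_i(n))$. $\Phi_k(x,y)=\#\{n\le x:\ p\mid\phi_k(n)\Rightarrow p\le y\}$ ($p$ prime). For a set $P$ of primes, $\Psi(x,P)=\#\{n\le x:\ p\mid n\Rightarrow p\in P\}$. The sets of primes $P_k$ are defined by $P_0=\{p\le y\}$ and $P_{k+1}=\{q\le x\text{ prime}:\ p\mid q-1\Rightarrow p\in P_k\}$. *)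

theory Defs
  imports "HOL-Number_Theory.Number_Theory"
begin

definition phi_iter :: "nat \<Rightarrow> nat \<Rightarrow> nat" where
  "phi_iter i n = (totient ^^ i) n"

definition Phi :: "nat \<Rightarrow> real \<Rightarrow> real \<Rightarrow> nat" where
  "Phi k x y = card {n::nat. 1 \<le> n \<and> real n \<le> x \<and>
      (\<forall>p. prime p \<and> p dvd phi_iter k n \<longrightarrow> real p \<le> y)}"

definition Psi :: "real \<Rightarrow> nat set \<Rightarrow> nat" where
  "Psi x P = card {n::nat. 1 \<le> n \<and> real n \<le> x \<and>
      (\<forall>p. prime p \<and> p dvd n \<longrightarrow> p \<in> P)}"

fun Pset :: "real \<Rightarrow> real \<Rightarrow> nat \<Rightarrow> nat set" where
  "Pset x y 0 = {p. prime p \<and> real p \<le> y}"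
| "Pset x y (Suc k) = {q. prime q \<and> real q \<le> x \<and>
      (\<forall>p. prime p \<and> p dvd (q - 1) \<longrightarrow> p \<in> Pset x y k)}"

definition Sset :: "nat \<Rightarrow> real \<Rightarrow> real \<Rightarrow> nat set" where
  "Sset i x y = {n::nat. 1 \<le> n \<and> real n \<le> x \<and>
      (\<exists>p. prime p \<and> real p > y \<and> p\<^sup>2 dvd phi_iter i n)}"

end

theory Submission
  imports Defs
begin

text \<open>Call \<open>m\<close> \<open>P\<close>-smooth if all its prime factors lie in \<open>P\<close>. If \<open>m \<le> x\<close> has no
  factor \<open>p\<^sup>2\<close> with \<open>p > y\<close>, then \<open>m\<close> is \<open>P\<^sub>j\<^sub>+\<^sub>1\<close>-smooth iff \<open>\<phi>(m)\<close> is \<open>P\<^sub>j\<close>-smooth: a prime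
  \<open>r\<close> divides \<open>\<phi>(m)\<close> only if \<open>r | p - 1\<close> for a prime \<open>p | m\<close>, or \<open>r\<^sup>2 | m\<close>, and in the
  latter case \<open>r \<le> y\<close>, so \<open>r \<in> P\<^sub>0 \<subseteq> P\<^sub>j\<close>. Iterating, for \<open>n\<close> outside all \<open>S\<^sub>i(x,y)\<close> with
  \<open>i < k\<close>, \<open>n\<close> is \<open>P\<^sub>k\<close>-smooth iff \<open>\<phi>\<^sub>k(n)\<close> is \<open>y\<close>-smooth. So the two sets counted by
  \<open>\<Psi>(x,P\<^sub>k)\<close> and \<open>\<Phi>\<^sub>k(x,y)\<close> differ only inside \<open>\<Union>\<^sub>i\<^sub><\<^sub>k S\<^sub>i(x,y)\<close>.\<close>

definition smooth :: "nat set \<Rightarrow> nat \<Rightarrow> bool" where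
  "smooth P m \<longleftrightarrow> (\<forall>p. prime p \<and> p dvd m \<longrightarrow> p \<in> P)"

definition large_square_factor :: "real \<Rightarrow> nat \<Rightarrow> bool" where
  "large_square_factor y m \<longleftrightarrow> (\<exists>p. prime p \<and> real p > y \<and> p\<^sup>2 dvd m)"

lemma phi_iter_0 [simp]: "phi_iter 0 n = n"
  by (simp add: phi_iter_def)

lemma phi_iter_Suc': "phi_iter (Suc i) n = phi_iter i (totient n)"
  unfolding phi_iter_def funpow_Suc_right comp_def ..

lemma finite_nat_le_real: "finite {n::nat. real n \<le> x}"
  by (rule finite_subset[of _ "{..nat \<lfloor>x\<rfloor>}"]) (auto, linarith)

lemma abs_card_diff_le_card:
  assumes "finite A" "finite B" "finite U" "A - B \<subseteq> U" "B - A \<subseteq> U"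
  shows "\<bar>real (card A) - real (card B)\<bar> \<le> real (card U)"
proof -
  have "card A - card B \<le> card U"
    using diff_card_le_card_Diff[OF \<open>finite B\<close>, of A] card_mono[OF \<open>finite U\<close> \<open>A - B \<subseteq> U\<close>]
    by linarith
  moreover have "card B - card A \<le> card U"
    using diff_card_le_card_Diff[OF \<open>finite A\<close>, of B] card_mono[OF \<open>finite U\<close> \<open>B - A \<subseteq> U\<close>]
    by linarith
  ultimately show ?thesis
    by linarith
qed

lemma prime_dvd_totientE:
  fixes m r :: nat
  assumes "m > 0" "prime r" "r dvd totient m"
  obtains p where "prime p" "p dvd m" "r dvd p - 1 \<or> (r = p \<and> p\<^sup>2 dvd m)"
proof -
  have "r dvd (\<Prod>p\<in>prime_factors m. p ^ (multiplicity p m - 1) * (p - 1))"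
    using assms totient_formula1[of m] by simp
  then obtain p where p: "p \<in> prime_factors m" "r dvd p ^ (multiplicity p m - 1) * (p - 1)"
    using prime_dvd_prod_iff[of "prime_factors m" r] \<open>prime r\<close> by auto
  then have "prime p" "p dvd m"
    by auto
  show thesis
  proof (cases "r dvd p - 1")
    case True
    with \<open>prime p\<close> \<open>p dvd m\<close> show thesis
      by (intro that) auto
  next
    case False
    with p(2) \<open>prime r\<close> have "r dvd p ^ (multiplicity p m - 1)"
      using prime_dvd_mult_iff by blast
    then have "r dvd p" and "multiplicity p m - 1 \<noteq> 0"
      using \<open>prime r\<close> prime_dvd_power[of r p] by (auto simp: not_prime_1)
    then have "r = p" and "p\<^sup>2 dvd m"
      using \<open>prime p\<close> \<open>prime r\<close> primes_dvd_imp_eq multiplicity_dvd'[of 2 p m] by auto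
    with \<open>prime p\<close> \<open>p dvd m\<close> show thesis
      by (intro that) auto
  qed
qed

lemma Pset_Suc_mono:
  assumes "y \<le> x"
  shows "Pset x y j \<subseteq> Pset x y (Suc j)"
proof (induction j)
  case 0
  show ?case
  proof
    fix q
    assume "q \<in> Pset x y 0"
    then have "prime q" "real q \<le> y"
      by auto
    have "p \<in> Pset x y 0" if "prime p" "p dvd q - 1" for p
    proof -
      have "p \<le> q - 1"
        using that prime_gt_1_nat[OF \<open>prime q\<close>] by (intro dvd_imp_le) auto
      with \<open>real q \<le> y\<close> prime_gt_1_nat[OF \<open>prime q\<close>] show ?thesis
        using \<open>prime p\<close> by simp
    qed
    with \<open>prime q\<close> \<open>real q \<le> y\<close> assms show "q \<in> Pset x y (Suc 0)"
      by auto
  qed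
next
  case (Suc j)
  then show ?case
    by auto
qed

lemma Pset_mono:
  assumes "y \<le> x" "j \<le> k"
  shows "Pset x y j \<subseteq> Pset x y k"
  using lift_Suc_mono_le[of "Pset x y", OF Pset_Suc_mono[OF \<open>y \<le> x\<close>] \<open>j \<le> k\<close>] .

lemma smooth_Pset_Suc_imp_smooth_totient:
  assumes "y \<le> x" "m > 0" "\<not> large_square_factor y m"
    and "smooth (Pset x y (Suc j)) m"
  shows "smooth (Pset x y j) (totient m)"
  unfolding smooth_def
proof (intro allI impI)
  fix r
  assume r: "prime r \<and> r dvd totient m"
  with \<open>m > 0\<close> obtain p where p: "prime p" "p dvd m" "r dvd p - 1 \<or> (r = p \<and> p\<^sup>2 dvd m)"
    by (auto elim: prime_dvd_totientE)
  show "r \<in> Pset x y j"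
  proof (cases "r dvd p - 1")
    case True
    moreover have "p \<in> Pset x y (Suc j)"
      using assms(4) p unfolding smooth_def by blast
    ultimately show ?thesis
      using r by simp
  next
    case False
    with p assms(3) have "real r \<le> y"
      unfolding large_square_factor_def by (meson not_le)
    with r have "r \<in> Pset x y 0"
      by simp
    then show ?thesis
      using Pset_mono[OF \<open>y \<le> x\<close>, of 0 j] by blast
  qed
qed

lemma smooth_totient_imp_smooth_Pset_Suc:
  assumes "m > 0" "real m \<le> x" "smooth (Pset x y j) (totient m)"
  shows "smooth (Pset x y (Suc j)) m"
  unfolding smooth_def
proof (intro allI impI)
  fix p
  assume p: "prime p \<and> p dvd m"
  with assms(1,2) have "real p \<le> x"
    using dvd_imp_le[of p m] by (meson of_nat_le_iff order_trans)
  have "p - 1 dvd totient m"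
    using p totient_dvd[of p m] totient_prime by simp
  then have "r \<in> Pset x y j" if "prime r" "r dvd p - 1" for r
    using assms(3) that dvd_trans unfolding smooth_def by blast
  with p \<open>real p \<le> x\<close> show "p \<in> Pset x y (Suc j)"
    by simp
qed

lemma smooth_Pset_iff_smooth_phi_iter:
  assumes "y \<le> x" "m > 0" "real m \<le> x" "\<forall>i<k. \<not> large_square_factor y (phi_iter i m)"
  shows "smooth (Pset x y k) m \<longleftrightarrow> smooth (Pset x y 0) (phi_iter k m)"
  using assms(2-4)
proof (induction k arbitrary: m)
  case 0
  then show ?case
    by simp
next
  case (Suc k)
  have "totient m > 0" "real (totient m) \<le> x"
    using Suc.prems(1,2) totient_le[of m] by (auto intro: order_trans)
  moreover have "\<forall>i<k. \<not> large_square_factor y (phi_iter i (totient m))"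
    using Suc.prems(3) by (auto simp flip: phi_iter_Suc')
  ultimately have "smooth (Pset x y k) (totient m) \<longleftrightarrow> smooth (Pset x y 0) (phi_iter (Suc k) m)"
    by (simp add: Suc.IH phi_iter_Suc')
  moreover have "\<not> large_square_factor y m"
    using Suc.prems(3) by (metis phi_iter_0 zero_less_Suc)
  ultimately show ?case
    using Suc.prems(1,2) \<open>y \<le> x\<close>
      smooth_Pset_Suc_imp_smooth_totient smooth_totient_imp_smooth_Pset_Suc
    by blast
qed

theorem lemma4p3:
  fixes x y :: real and k :: nat
  assumes "2 \<le> y" and "y \<le> x"
  shows "\<bar>real (Psi x (Pset x y k)) - real (Phi k x y)\<bar>
           \<le> (\<Sum>i<k. real (card (Sset i x y)))"
proof -
  define A where "A = {n. 1 \<le> n \<and> real n \<le> x \<and> smooth (Pset x y k) n}"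
  define B where "B = {n. 1 \<le> n \<and> real n \<le> x \<and> smooth (Pset x y 0) (phi_iter k n)}"
  define U where "U = (\<Union>i<k. Sset i x y)"
  have finite: "finite A" "finite B" "finite U"
    unfolding A_def B_def U_def Sset_def by (auto intro: finite_subset[OF _ finite_nat_le_real])
  have "n \<in> A \<longleftrightarrow> n \<in> B" if "n \<notin> U" for n
    using that smooth_Pset_iff_smooth_phi_iter[OF \<open>y \<le> x\<close>, of n k]
    unfolding A_def B_def U_def Sset_def large_square_factor_def by auto
  then have "\<bar>real (card A) - real (card B)\<bar> \<le> real (card U)"
    using finite by (intro abs_card_diff_le_card) auto
  also have "card U \<le> (\<Sum>i<k. card (Sset i x y))"
    unfolding U_def by (rule card_UN_le) simp
  finally show ?thesis
    unfolding Psi_def Phi_def A_def B_def smooth_def by simp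
qed

end
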